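(* Let $\mathcal N_2$ be the multiset $\{\{(w_2+\omega,w_3,w_1)\in\mathbb F_q^{3m}: w_1\in\Delta_A^c,\ w_2\in\Delta_B,\ w_3\in\Delta_C,\ \omega\in\{\mathbf 0,w_1\}\}\}$ (assuming $|A|<m$) and $\mathcal N_4$ the multiset $\{\{(w_2+\omega,w_3,w_1)\in\mathbb F_q^{3m}: w_1\in\Delta_A^*,\ w_2\in\Delta_B,\ w_3\in\Delta_C^c,\ \omega\in\{\mathbf 0,w_1\}\}\}$ (assuming $|C|<m$, $|A|\ge2$), where each multiset contains one element for each admissible tuple $(w_1,w_2,w_3,\omega)$. (a) If $B\subseteq A$, then all elements of $\mathcal N_2$ are distinct, and there is a subset $\overline{\mathcal N}_2\subseteq\mathcal N_2$ with $|\overline{\mathcal N}_2|=|\mathcal N_2|/(q-1)$, whose elements span pairwise distinct one-dimensional subspaces of $\mathbb F_q^{3m}$, such that $\mathcal N_2=\{\alpha x: x\in\overline{\mathcal N}_2,\ \alpha\in\mathbb F_q^*\}$. (b) If $A\cap B=\emptyset$, then all elements of $\mathcal N_4$ are distinct, and there is a subset $\overline{\mathcal N}_4\subseteq\mathcal N_4$ with $|\overline{\mathcal N}_4|=|\mathcal N_4|/(q-1)$, whose elements span pairwise distinct one-dimensional subspaces, such that $\mathcal N_4=\{\alpha x: x\in\overline{\mathcal N}_4,\ \alpha\in\mathbb F_q^*\}$.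
   Context: $q$ is a prime power, $\mathbb F_q$ the field of order $q$, $\mathbb F_q^*=\mathbb F_q\setminus\{0\}$, $m\ge2$, $[m]=\{1,\dots,m\}$, $\mathrm{supp}(v)=\{i:v_i\ne0\}$ for $v\in\mathbb F_q^m$. For nonempty $P\subseteq[m]$, $\Delta_P=\{v\in\mathbb F_q^m:\mathrm{supp}(v)\subseteq P\}$, $\Delta_P^c=\mathbb F_q^m\setminus\Delta_P$, $\Delta_P^*=\Delta_P\setminus\{\mathbf 0\}$. $A,B,C$ are nonempty subsets of $[m]$. Elements of $\mathbb F_q^{3m}$ are written $(x,y,z)$ with $x,y,z\in\mathbb F_q^m$. *)

theory Defs
  imports "HOL-Analysis.Analysis"
begin

(* F_q is a finite field type 'a (q = CARD('a)); [m] is a finite index type 'n (m = CARD('n));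
   F_q^m is 'a ^ 'n; F_q^{3m} is triples ('a^'n) \<times> ('a^'n) \<times> ('a^'n). *)

definition supp :: "'a::zero ^ 'n \<Rightarrow> 'n set" where
  "supp v = {i. v $ i \<noteq> 0}"

definition Delta :: "'n set \<Rightarrow> ('a::zero ^ 'n) set" where
  "Delta P = {v. supp v \<subseteq> P}"

definition DeltaC :: "'n set \<Rightarrow> ('a::zero ^ 'n) set" where
  "DeltaC P = UNIV - Delta P"

definition DeltaS :: "'n set \<Rightarrow> ('a::zero ^ 'n) set" where
  "DeltaS P = Delta P - {0}"

definition smult3 :: "'a::times \<Rightarrow> ('a^'n) \<times> ('a^'n) \<times> ('a^'n) \<Rightarrow> ('a^'n) \<times> ('a^'n) \<times> ('a^'n)" where
  "smult3 c v = (case v of (x, y, z) \<Rightarrow> (c *s x, c *s y, c *s z))"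

definition line3 :: "('a::field^'n) \<times> ('a^'n) \<times> ('a^'n) \<Rightarrow> (('a^'n) \<times> ('a^'n) \<times> ('a^'n)) set" where
  "line3 v = {smult3 c v | c. True}"

definition N2 :: "'n set \<Rightarrow> 'n set \<Rightarrow> 'n set \<Rightarrow> (('a::{field,finite}^'n::finite) \<times> ('a^'n) \<times> ('a^'n)) multiset" where
  "N2 A B C = image_mset (\<lambda>(w1, w2, w3, \<omega>). (w2 + \<omega>, w3, w1))
     (mset_set {(w1, w2, w3, \<omega>). w1 \<in> DeltaC A \<and> w2 \<in> Delta B \<and> w3 \<in> Delta C \<and> \<omega> \<in> {0, w1}})"

definition N4 :: "'n set \<Rightarrow> 'n set \<Rightarrow> 'n set \<Rightarrow> (('a::{field,finite}^'n::finite) \<times> ('a^'n) \<times> ('a^'n)) multiset" where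
  "N4 A B C = image_mset (\<lambda>(w1, w2, w3, \<omega>). (w2 + \<omega>, w3, w1))
     (mset_set {(w1, w2, w3, \<omega>). w1 \<in> DeltaS A \<and> w2 \<in> Delta B \<and> w3 \<in> DeltaC C \<and> \<omega> \<in> {0, w1}})"

definition projective_reps :: "(('a::{field,finite}^'n::finite) \<times> ('a^'n) \<times> ('a^'n)) multiset \<Rightarrow> bool" where
  "projective_reps N \<longleftrightarrow>
     (\<forall>x. count N x \<le> 1) \<and>
     (\<exists>Nbar. Nbar \<subseteq> set_mset N \<and>
        real (card Nbar) = real (size N) / real (CARD('a) - 1) \<and>
        (\<forall>x\<in>Nbar. x \<noteq> 0) \<and>
        (\<forall>x\<in>Nbar. \<forall>y\<in>Nbar. x \<noteq> y \<longrightarrow> line3 x \<noteq> line3 y) \<and>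
        N = mset_set {smult3 \<alpha> x | x \<alpha>. x \<in> Nbar \<and> \<alpha> \<noteq> 0})"

end

theory Submission
  imports Defs
begin

(* Both multisets are images of (w1, w2, w3, \<omega>) \<mapsto> (w2 + \<omega>, w3, w1), where w1 ranges over a
   set W1 with W1 \<inter> \<Delta>_B = {} (W1 = \<Delta>_A^c with B \<subseteq> A, resp. W1 = \<Delta>_A^* with A \<inter> B = {}).
   The image determines w1 and w3, and it determines w2 and \<omega> because two different choices
   of \<omega> \<in> {0, w1} would force w1 to be a difference of two vectors of \<Delta>_B.  So the multiset is
   a set, which avoids 0 and is stable under scaling all four coordinates by \<alpha> \<noteq> 0.  Such a set
   is a disjoint union of punctured lines F_q^* x, each of size q - 1, and one point from each
   of them forms the required set of representatives. *)

type_synonym ('a, 'n) triple = "('a^'n) \<times> ('a^'n) \<times> ('a^'n)"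

lemma smult3_smult3: "smult3 a (smult3 b v) = smult3 (a * b) (v :: ('a::field, 'n::finite) triple)"
  by (cases v) (simp add: smult3_def)

lemma smult3_one [simp]: "smult3 1 (v :: ('a::field, 'n::finite) triple) = v"
  by (cases v) (simp add: smult3_def)

lemma smult3_eq_0_iff: "smult3 c (v :: ('a::field, 'n::finite) triple) = 0 \<longleftrightarrow> c = 0 \<or> v = 0"
  by (cases v) (auto simp: smult3_def vec_eq_iff zero_prod_def)

lemma smult3_cancel_right:
  assumes "x \<noteq> 0"
  shows "smult3 a x = smult3 b (x :: ('a::field, 'n::finite) triple) \<longleftrightarrow> a = b"
proof
  assume "smult3 a x = smult3 b x"
  then have "smult3 (a - b) x = 0"
    by (cases x) (simp add: smult3_def zero_prod_def)
  then show "a = b"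
    using assms by (simp add: smult3_eq_0_iff)
qed simp

definition orbit3 :: "('a::field, 'n::finite) triple \<Rightarrow> ('a, 'n) triple set" where
  "orbit3 x = {smult3 \<alpha> x | \<alpha>. \<alpha> \<noteq> 0}"

lemma self_in_orbit3: "x \<in> orbit3 x"
  unfolding orbit3_def by (auto intro!: exI[of _ 1])

lemma orbit3_eq_line3_diff: "x \<noteq> 0 \<Longrightarrow> orbit3 x = line3 x - {0}"
  unfolding line3_def orbit3_def by (auto simp: smult3_eq_0_iff)

lemma orbit3_eqI:
  assumes "y \<in> orbit3 x"
  shows "orbit3 y = orbit3 x"
proof -
  obtain \<beta> where \<beta>: "\<beta> \<noteq> 0" "y = smult3 \<beta> x"
    using assms unfolding orbit3_def by blast
  have "smult3 \<alpha> y = smult3 (\<alpha> * \<beta>) x" for \<alpha>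
    using \<beta> by (simp add: smult3_smult3)
  moreover have "smult3 \<gamma> x = smult3 (\<gamma> / \<beta>) y" for \<gamma>
    using \<beta> by (simp add: smult3_smult3)
  ultimately show ?thesis
    using \<beta>(1) unfolding orbit3_def by (metis (full_types) divide_eq_0_iff mult_eq_0_iff)
qed

lemma card_orbit3:
  fixes x :: "('a::{field,finite}, 'n::finite) triple"
  assumes "x \<noteq> 0"
  shows "card (orbit3 x) = CARD('a) - 1"
proof -
  have "orbit3 x = (\<lambda>\<alpha>. smult3 \<alpha> x) ` (UNIV - {0 :: 'a})"
    unfolding orbit3_def by auto
  moreover have "inj_on (\<lambda>\<alpha>. smult3 \<alpha> x) (UNIV - {0 :: 'a})"
    using smult3_cancel_right[OF assms] by (simp add: inj_on_def)
  ultimately show ?thesis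
    by (simp add: card_image card_Diff_singleton)
qed

lemma orbit3_disjoint: "orbit3 x \<noteq> orbit3 y \<Longrightarrow> disjnt (orbit3 x) (orbit3 y)"
  unfolding disjnt_def using orbit3_eqI by blast

lemma card_eq_card_orbits:
  fixes S :: "('a::{field,finite}, 'n::finite) triple set"
  assumes zero: "0 \<notin> S" and scale: "\<And>x \<alpha>. x \<in> S \<Longrightarrow> \<alpha> \<noteq> 0 \<Longrightarrow> smult3 \<alpha> x \<in> S"
  shows "card S = card (orbit3 ` S) * (CARD('a) - 1)"
proof -
  have "\<Union> (orbit3 ` S) = S"
    using scale self_in_orbit3 unfolding orbit3_def by blast
  moreover have "pairwise disjnt (orbit3 ` S)"
    by (rule pairwise_imageI) (simp add: orbit3_disjoint)
  ultimately have "card S = (\<Sum>X\<in>orbit3 ` S. card X)"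
    using card_Union_disjoint by (metis finite)
  also have "\<dots> = (\<Sum>X\<in>orbit3 ` S. CARD('a) - 1)"
  proof (rule sum.cong)
    fix X assume "X \<in> orbit3 ` S"
    then obtain x where "x \<in> S" "X = orbit3 x"
      by blast
    then show "card X = CARD('a) - 1"
      using zero card_orbit3[of x] by auto
  qed simp
  finally show ?thesis
    by simp
qed

lemma projective_reps_mset_set:
  fixes S :: "('a::{field,finite}, 'n::finite) triple set"
  assumes zero: "0 \<notin> S" and scale: "\<And>x \<alpha>. x \<in> S \<Longrightarrow> \<alpha> \<noteq> 0 \<Longrightarrow> smult3 \<alpha> x \<in> S"
  shows "projective_reps (mset_set S)"
proof -
  define rep where "rep X = (SOME x. x \<in> X)" for X :: "('a, 'n) triple set"
  define Nbar where "Nbar = rep ` orbit3 ` S"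
  have rep: "rep (orbit3 x) \<in> S \<and> orbit3 (rep (orbit3 x)) = orbit3 x" if "x \<in> S" for x
  proof -
    have "rep (orbit3 x) \<in> orbit3 x"
      unfolding rep_def using self_in_orbit3 by (rule someI)
    moreover have "orbit3 x \<subseteq> S"
      using that scale unfolding orbit3_def by blast
    ultimately show ?thesis
      using orbit3_eqI by blast
  qed
  have Nbar_S: "Nbar \<subseteq> S"
    using rep unfolding Nbar_def by blast
  have rep_Nbar: "rep (orbit3 x) = x" if "x \<in> Nbar" for x
    using that rep unfolding Nbar_def by auto
  have orbits_Nbar: "orbit3 ` Nbar = orbit3 ` S"
    using rep unfolding Nbar_def image_image by (intro image_cong) simp_all
  have "inj_on rep (orbit3 ` S)"
  proof (rule inj_onI)
    fix X Y assume "X \<in> orbit3 ` S" "Y \<in> orbit3 ` S" "rep X = rep Y"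
    then obtain x y where "x \<in> S" "y \<in> S" "X = orbit3 x" "Y = orbit3 y"
      by blast
    then show "X = Y"
      using rep \<open>rep X = rep Y\<close> by metis
  qed
  then have card_Nbar: "card Nbar = card (orbit3 ` S)"
    unfolding Nbar_def by (rule card_image)
  have lines_distinct: "x = y" if "x \<in> Nbar" "y \<in> Nbar" "line3 x = line3 y" for x y
  proof -
    have "orbit3 x = line3 x - {0}" "orbit3 y = line3 y - {0}"
      using that(1,2) Nbar_S zero orbit3_eq_line3_diff by (metis subsetD)+
    then show "x = y"
      using that rep_Nbar by metis
  qed
  have "{smult3 \<alpha> x | x \<alpha>. x \<in> Nbar \<and> \<alpha> \<noteq> 0} = \<Union> (orbit3 ` Nbar)"
    unfolding orbit3_def by blast
  also have "\<dots> = S"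
    unfolding orbits_Nbar using scale self_in_orbit3 unfolding orbit3_def by blast
  finally have span: "{smult3 \<alpha> x | x \<alpha>. x \<in> Nbar \<and> \<alpha> \<noteq> 0} = S" .
  have "1 < CARD('a)"
    using card_mono[of UNIV "{0::'a, 1}"] by simp
  then have "real (card Nbar) = real (card S) / real (CARD('a) - 1)"
    using card_eq_card_orbits[OF zero scale] card_Nbar by simp
  then show ?thesis
    unfolding projective_reps_def using Nbar_S zero lines_distinct span
    by (simp add: count_mset_set') blast
qed

lemma supp_smult: "(\<alpha>::'a::field) \<noteq> 0 \<Longrightarrow> supp (\<alpha> *s v) = supp v"
  by (auto simp: supp_def)

lemma smult_mem_Delta_iff: "(\<alpha>::'a::field) \<noteq> 0 \<Longrightarrow> \<alpha> *s v \<in> Delta P \<longleftrightarrow> v \<in> Delta P"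
  by (simp add: Delta_def supp_smult)

lemma zero_mem_Delta: "0 \<in> Delta P"
  by (simp add: Delta_def supp_def)

lemma diff_mem_Delta:
  fixes u v :: "'a::ab_group_add^'n::finite"
  shows "u \<in> Delta P \<Longrightarrow> v \<in> Delta P \<Longrightarrow> u - v \<in> Delta P"
  by (auto simp: Delta_def supp_def subset_iff) metis

lemma Delta_Int: "Delta P \<inter> Delta Q = Delta (P \<inter> Q)"
  by (auto simp: Delta_def)

lemma Delta_empty: "Delta {} = {0}"
  by (auto simp: Delta_def supp_def vec_eq_iff)

definition tuples :: "('a::field^'n::finite) set \<Rightarrow> 'n set \<Rightarrow> ('a^'n) set \<Rightarrow>
    (('a^'n) \<times> ('a^'n) \<times> ('a^'n) \<times> ('a^'n)) set" where
  "tuples W1 B W3 = {(w1, w2, w3, \<omega>). w1 \<in> W1 \<and> w2 \<in> Delta B \<and> w3 \<in> W3 \<and> \<omega> \<in> {0, w1}}"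

definition arrange :: "('a^'n) \<times> ('a^'n) \<times> ('a^'n) \<times> ('a^'n) \<Rightarrow> ('a::field, 'n::finite) triple" where
  "arrange = (\<lambda>(w1, w2, w3, \<omega>). (w2 + \<omega>, w3, w1))"

lemma inj_on_arrange:
  assumes "W1 \<inter> Delta B = {}"
  shows "inj_on arrange (tuples W1 B W3)"
proof (rule inj_onI)
  fix s t
  assume s: "s \<in> tuples W1 B W3" and t: "t \<in> tuples W1 B W3" and eq: "arrange s = arrange t"
  obtain w1 w2 w3 \<omega> v2 \<eta> where st: "s = (w1, w2, w3, \<omega>)" "t = (w1, v2, w3, \<eta>)"
    using eq by (cases s, cases t) (auto simp: arrange_def)
  have sum: "w2 + \<omega> = v2 + \<eta>"
    using eq unfolding st by (simp add: arrange_def)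
  have "\<omega> = \<eta>"
  proof (rule ccontr)
    assume "\<omega> \<noteq> \<eta>"
    then have "w1 = v2 - w2 \<or> w1 = w2 - v2"
      using s t sum unfolding st tuples_def by (auto simp: algebra_simps)
    then have "w1 \<in> Delta B"
      using s t diff_mem_Delta unfolding st tuples_def by auto
    then show False
      using s assms unfolding st tuples_def by auto
  qed
  then show "s = t"
    using st sum by simp
qed

lemma projective_reps_arrange:
  assumes disjoint: "W1 \<inter> Delta B = {}"
    and scale_W1: "\<And>\<alpha> v. \<alpha> \<noteq> 0 \<Longrightarrow> v \<in> W1 \<Longrightarrow> \<alpha> *s v \<in> W1"
    and scale_W3: "\<And>\<alpha> v. \<alpha> \<noteq> 0 \<Longrightarrow> v \<in> W3 \<Longrightarrow> \<alpha> *s v \<in> W3"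
  shows "projective_reps (image_mset arrange (mset_set (tuples W1 B W3))
           :: ('a::{field,finite}, 'n::finite) triple multiset)"
proof -
  have "0 \<notin> arrange ` tuples W1 B W3"
    using disjoint zero_mem_Delta by (auto simp: tuples_def arrange_def zero_prod_def)
  moreover have "smult3 \<alpha> x \<in> arrange ` tuples W1 B W3"
    if x: "x \<in> arrange ` tuples W1 B W3" and \<alpha>: "\<alpha> \<noteq> 0" for x \<alpha>
  proof -
    obtain w1 w2 w3 \<omega> where w: "(w1, w2, w3, \<omega>) \<in> tuples W1 B W3" "x = arrange (w1, w2, w3, \<omega>)"
      using x by (metis imageE prod_cases4)
    have "smult3 \<alpha> x = arrange (\<alpha> *s w1, \<alpha> *s w2, \<alpha> *s w3, \<alpha> *s \<omega>)"
      using w(2) by (simp add: arrange_def smult3_def vector_add_ldistrib)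
    moreover have "(\<alpha> *s w1, \<alpha> *s w2, \<alpha> *s w3, \<alpha> *s \<omega>) \<in> tuples W1 B W3"
      using w(1) \<alpha> scale_W1 scale_W3 by (auto simp: tuples_def smult_mem_Delta_iff)
    ultimately show ?thesis
      by blast
  qed
  ultimately show ?thesis
    by (simp add: image_mset_mset_set[OF inj_on_arrange[OF disjoint]] projective_reps_mset_set)
qed

theorem mainTheorem11:
  fixes A B C :: "'n::finite set"
  assumes "CARD('n) \<ge> 2"
    and "A \<noteq> {}" and "B \<noteq> {}" and "C \<noteq> {}"
  shows "(card A < CARD('n) \<and> B \<subseteq> A \<longrightarrow>
            projective_reps (N2 A B C :: (('a::{field,finite}^'n) \<times> ('a^'n) \<times> ('a^'n)) multiset))
       \<and> (card C < CARD('n) \<and> card A \<ge> 2 \<and> A \<inter> B = {} \<longrightarrow>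
            projective_reps (N4 A B C :: (('a^'n) \<times> ('a^'n) \<times> ('a^'n)) multiset))"
proof (intro conjI impI)
  assume "card A < CARD('n) \<and> B \<subseteq> A"
  then have "DeltaC A \<inter> Delta B = {}"
    by (auto simp: DeltaC_def Delta_def)
  then show "projective_reps (N2 A B C :: ('a, 'n) triple multiset)"
    unfolding N2_def tuples_def[symmetric] arrange_def[symmetric]
    by (rule projective_reps_arrange) (auto simp: DeltaC_def smult_mem_Delta_iff)
next
  assume "card C < CARD('n) \<and> card A \<ge> 2 \<and> A \<inter> B = {}"
  then have "DeltaS A \<inter> Delta B = {}"
    unfolding DeltaS_def using Delta_Int[of A B] Delta_empty by auto
  then show "projective_reps (N4 A B C :: ('a, 'n) triple multiset)"
    unfolding N4_def tuples_def[symmetric] arrange_def[symmetric]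
    by (rule projective_reps_arrange) (auto simp: DeltaS_def DeltaC_def smult_mem_Delta_iff)
qed

end
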